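(* Let $(e_i)_{i\in\omega}$ be a sequence of events with $<_0$, $\mathrm{Add},\mathrm{Rem},\mathrm{Cnt}$, $\mathrm{val}$, $\chi$ as in the context, and let $\gamma$ be a function. Let FS1$'$ be the property obtained from FS1 by replacing its last clause (there is no event $r$ with $\mathrm{Rem}^1(r)$, $\gamma(r)=\gamma(a)$ and $\gamma(a)<_0 r<_0 a$) by the clause: there is no event $b$ with $\mathrm{Rem}(b)$, $\chi(b)\neq f$, $\gamma(a)<_0 b<_0 a$ and $\mathrm{val}(b)=\mathrm{val}(a)$. Then $\gamma$ satisfies FS0, FS1 and FS2 if and only if $\gamma$ satisfies FS0, FS1$'$ and FS2.
   Context: Setting: an infinite sequence of events $(e_i)_{i\in\omega}$, linearly ordered by $<_0$ where $e_i<_0e_j$ iff $i<j$. Three unary predicates $\mathrm{Add},\mathrm{Rem},\mathrm{Cnt}$ partition the events. Each event $a$ has a key $\mathrm{val}(a)\in\mathbb N$ and a status $\chi(a)\in\{0,1,f\}$, with $\chi(a)\in\{0,1\}$ whenever $\mathrm{Cnt}(a)$. Notation: for $p\in\{0,1,f\}$, $\mathrm{Add}^p(a)$ abbreviates $\mathrm{Add}(a)\wedge\chi(a)=p$, and $\mathrm{Rem}^p(a)$ similarly; $\mathrm{Cnt}^p$ similarly for $p\in\{0,1\}$; for $p\in\{0,1\}$, $\mathrm{Op}^p(a)$ abbreviates $(\mathrm{Add}(a)\vee\mathrm{Rem}(a)\vee\mathrm{Cnt}(a))\wedge\chi(a)=p$. FS0: $<_0$ is a linear ordering of the events; $\mathrm{Add},\mathrm{Rem},\mathrm{Cnt}$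 are pairwise disjoint; $\gamma$ is defined on the set of $\mathrm{Op}^1$ events and its values are $\mathrm{Add}^0$ events. FS1: for every event $a$ with $\mathrm{Op}^1(a)$: $\gamma(a)<_0 a$, $\mathrm{Add}^0(\gamma(a))$, $\mathrm{val}(a)=\mathrm{val}(\gamma(a))$, and there is no event $r$ with $\mathrm{Rem}^1(r)$, $\gamma(r)=\gamma(a)$ and $\gamma(a)<_0 r<_0 a$. FS2: for all events $a<_0 b$ with $\mathrm{Add}^0(a)$ and $\mathrm{Op}^0(b)$: if $\mathrm{val}(a)=\mathrm{val}(b)$ then there is an event $r$ with $a<_0 r<_0 b$, $\mathrm{Rem}^1(r)$ and $a=\gamma(r)$. *)

theory Defs
  imports Main
begin

text \<open>Events are the natural numbers (event e_i is i), and the order <_0 is the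
  usual order on nat. Status values: S0, S1, Sf (the status f).\<close>

datatype status = S0 | S1 | Sf

definition Op :: "(nat \<Rightarrow> bool) \<Rightarrow> (nat \<Rightarrow> bool) \<Rightarrow> (nat \<Rightarrow> bool) \<Rightarrow> (nat \<Rightarrow> status)
    \<Rightarrow> status \<Rightarrow> nat \<Rightarrow> bool" where
  "Op Add Rem Cnt \<chi> p a \<longleftrightarrow> (Add a \<or> Rem a \<or> Cnt a) \<and> \<chi> a = p"

definition FS0 :: "(nat \<Rightarrow> bool) \<Rightarrow> (nat \<Rightarrow> bool) \<Rightarrow> (nat \<Rightarrow> bool) \<Rightarrow> (nat \<Rightarrow> status)
    \<Rightarrow> (nat \<Rightarrow> nat) \<Rightarrow> bool" where
  "FS0 Add Rem Cnt \<chi> \<gamma> \<longleftrightarrow>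
     (\<forall>a. \<not> (Add a \<and> Rem a) \<and> \<not> (Add a \<and> Cnt a) \<and> \<not> (Rem a \<and> Cnt a)) \<and>
     (\<forall>a. Op Add Rem Cnt \<chi> S1 a \<longrightarrow> Add (\<gamma> a) \<and> \<chi> (\<gamma> a) = S0)"

definition FS1 :: "(nat \<Rightarrow> bool) \<Rightarrow> (nat \<Rightarrow> bool) \<Rightarrow> (nat \<Rightarrow> bool) \<Rightarrow> (nat \<Rightarrow> nat)
    \<Rightarrow> (nat \<Rightarrow> status) \<Rightarrow> (nat \<Rightarrow> nat) \<Rightarrow> bool" where
  "FS1 Add Rem Cnt val \<chi> \<gamma> \<longleftrightarrow>
     (\<forall>a. Op Add Rem Cnt \<chi> S1 a \<longrightarrow>
        \<gamma> a < a \<and> Add (\<gamma> a) \<and> \<chi> (\<gamma> a) = S0 \<and> val a = val (\<gamma> a) \<and>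
        \<not> (\<exists>r. Rem r \<and> \<chi> r = S1 \<and> \<gamma> r = \<gamma> a \<and> \<gamma> a < r \<and> r < a))"

definition FS1' :: "(nat \<Rightarrow> bool) \<Rightarrow> (nat \<Rightarrow> bool) \<Rightarrow> (nat \<Rightarrow> bool) \<Rightarrow> (nat \<Rightarrow> nat)
    \<Rightarrow> (nat \<Rightarrow> status) \<Rightarrow> (nat \<Rightarrow> nat) \<Rightarrow> bool" where
  "FS1' Add Rem Cnt val \<chi> \<gamma> \<longleftrightarrow>
     (\<forall>a. Op Add Rem Cnt \<chi> S1 a \<longrightarrow>
        \<gamma> a < a \<and> Add (\<gamma> a) \<and> \<chi> (\<gamma> a) = S0 \<and> val a = val (\<gamma> a) \<and>
        \<not> (\<exists>b. Rem b \<and> \<chi> b \<noteq> Sf \<and> \<gamma> a < b \<and> b < a \<and> val b = val a))"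

definition FS2 :: "(nat \<Rightarrow> bool) \<Rightarrow> (nat \<Rightarrow> bool) \<Rightarrow> (nat \<Rightarrow> bool) \<Rightarrow> (nat \<Rightarrow> nat)
    \<Rightarrow> (nat \<Rightarrow> status) \<Rightarrow> (nat \<Rightarrow> nat) \<Rightarrow> bool" where
  "FS2 Add Rem Cnt val \<chi> \<gamma> \<longleftrightarrow>
     (\<forall>a b. a < b \<and> Add a \<and> \<chi> a = S0 \<and> Op Add Rem Cnt \<chi> S0 b \<and> val a = val b \<longrightarrow>
        (\<exists>r. a < r \<and> r < b \<and> Rem r \<and> \<chi> r = S1 \<and> a = \<gamma> r))"

end

theory Submission
  imports Defs
begin

text \<open>A status-1 removal r with \<gamma> r = \<gamma> a has the key of a, so FS1' implies FS1.
  Conversely, let b be a removal of status 0 or 1 with the key of a strictly between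
  \<gamma> a and a. If \<chi> b = 0, FS2 demands a status-1 removal of \<gamma> a before b, which
  FS1 forbids. If \<chi> b = 1, the adds \<gamma> a and \<gamma> b carry the same key: either they
  coincide, and b itself violates FS1, or FS2 demands that the earlier one be removed
  before the later one, again inside an interval that FS1 keeps free.\<close>

lemma Op_S0_if_Add0: "Add x \<Longrightarrow> \<chi> x = S0 \<Longrightarrow> Op Add Rem Cnt \<chi> S0 x"
  and Op_S1_if_Rem1: "Rem x \<Longrightarrow> \<chi> x = S1 \<Longrightarrow> Op Add Rem Cnt \<chi> S1 x"
  by (simp_all add: Op_def)

lemma FS1D:
  assumes "FS1 Add Rem Cnt val \<chi> \<gamma>" and "Op Add Rem Cnt \<chi> S1 a"
  shows "\<gamma> a < a" and "Add (\<gamma> a)" and "\<chi> (\<gamma> a) = S0" and "val (\<gamma> a) = val a"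
    and "\<lbrakk>Rem r; \<chi> r = S1; \<gamma> r = \<gamma> a; \<gamma> a < r; r < a\<rbrakk> \<Longrightarrow> False"
  using assms unfolding FS1_def by auto

lemma FS1'D:
  assumes "FS1' Add Rem Cnt val \<chi> \<gamma>" and "Op Add Rem Cnt \<chi> S1 a"
  shows "\<gamma> a < a" and "Add (\<gamma> a)" and "\<chi> (\<gamma> a) = S0" and "val (\<gamma> a) = val a"
    and "\<lbrakk>Rem b; \<chi> b \<noteq> Sf; \<gamma> a < b; b < a; val b = val a\<rbrakk> \<Longrightarrow> False"
  using assms unfolding FS1'_def by fastforce+

lemma FS2D:
  assumes "FS2 Add Rem Cnt val \<chi> \<gamma>" and "a < b" and "Add a" and "\<chi> a = S0"
    and "Op Add Rem Cnt \<chi> S0 b" and "val a = val b"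
  obtains r where "a < r" and "r < b" and "Rem r" and "\<chi> r = S1" and "\<gamma> r = a"
  using assms unfolding FS2_def by metis

lemma FS1_FS2_no_Op0_between_gamma:
  assumes FS1: "FS1 Add Rem Cnt val \<chi> \<gamma>" and FS2: "FS2 Add Rem Cnt val \<chi> \<gamma>"
    and a: "Op Add Rem Cnt \<chi> S1 a" and b: "Op Add Rem Cnt \<chi> S0 b"
    and "\<gamma> a < b" and "b < a" and "val b = val a"
  shows False
proof -
  have "val (\<gamma> a) = val b"
    using FS1D(4)[OF FS1 a] \<open>val b = val a\<close> by simp
  with FS2D[OF FS2 \<open>\<gamma> a < b\<close> FS1D(2,3)[OF FS1 a] b]
  obtain r where "\<gamma> a < r" "r < b" "Rem r" "\<chi> r = S1" "\<gamma> r = \<gamma> a"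
    by blast
  with \<open>b < a\<close> show False
    using FS1D(5)[OF FS1 a] by force
qed

lemma FS1_FS2_imp_FS1':
  assumes FS1: "FS1 Add Rem Cnt val \<chi> \<gamma>" and FS2: "FS2 Add Rem Cnt val \<chi> \<gamma>"
  shows "FS1' Add Rem Cnt val \<chi> \<gamma>"
  unfolding FS1'_def
proof (intro allI impI conjI notI)
  fix a
  assume a: "Op Add Rem Cnt \<chi> S1 a"
  show "\<gamma> a < a" "Add (\<gamma> a)" "\<chi> (\<gamma> a) = S0" "val a = val (\<gamma> a)"
    using FS1D(1-4)[OF FS1 a] by simp_all
  assume "\<exists>b. Rem b \<and> \<chi> b \<noteq> Sf \<and> \<gamma> a < b \<and> b < a \<and> val b = val a"
  then obtain b where "Rem b" "\<chi> b \<noteq> Sf" "\<gamma> a < b" "b < a" "val b = val a"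
    by blast
  note no_Op0 = FS1_FS2_no_Op0_between_gamma[OF FS1 FS2]
  show False
  proof (cases "\<chi> b")
    case S0
    then show False
      using no_Op0[OF a _ \<open>\<gamma> a < b\<close> \<open>b < a\<close> \<open>val b = val a\<close>] \<open>Rem b\<close>
      by (simp add: Op_def)
  next
    case S1
    have b: "Op Add Rem Cnt \<chi> S1 b"
      using \<open>Rem b\<close> S1 by (rule Op_S1_if_Rem1)
    note gamma_b = FS1D[OF FS1 b]
    consider "\<gamma> b = \<gamma> a" | "\<gamma> a < \<gamma> b" | "\<gamma> b < \<gamma> a"
      by linarith
    then show False
    proof cases
      case 1
      then show False
        using FS1D(5)[OF FS1 a] \<open>Rem b\<close> S1 \<open>\<gamma> a < b\<close> \<open>b < a\<close> by blast
    next
      case 2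
      have "Op Add Rem Cnt \<chi> S0 (\<gamma> b)"
        using gamma_b(2,3) by (rule Op_S0_if_Add0)
      moreover have "\<gamma> b < a"
        using gamma_b(1) \<open>b < a\<close> by simp
      ultimately show False
        using no_Op0[OF a _ 2] gamma_b(4) \<open>val b = val a\<close> by simp
    next
      case 3
      have "Op Add Rem Cnt \<chi> S0 (\<gamma> a)"
        using FS1D(2,3)[OF FS1 a] by (rule Op_S0_if_Add0)
      with 3 show False
        using no_Op0[OF b] FS1D(4)[OF FS1 a] \<open>\<gamma> a < b\<close> \<open>val b = val a\<close> by simp
    qed
  next
    case Sf
    with \<open>\<chi> b \<noteq> Sf\<close> show False by contradiction
  qed
qed

lemma FS1'_imp_FS1:
  assumes FS1': "FS1' Add Rem Cnt val \<chi> \<gamma>"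
  shows "FS1 Add Rem Cnt val \<chi> \<gamma>"
  unfolding FS1_def
proof (intro allI impI conjI notI)
  fix a
  assume a: "Op Add Rem Cnt \<chi> S1 a"
  show "\<gamma> a < a" "Add (\<gamma> a)" "\<chi> (\<gamma> a) = S0" "val a = val (\<gamma> a)"
    using FS1'D(1-4)[OF FS1' a] by simp_all
  assume "\<exists>r. Rem r \<and> \<chi> r = S1 \<and> \<gamma> r = \<gamma> a \<and> \<gamma> a < r \<and> r < a"
  then obtain r where r: "Rem r" "\<chi> r = S1" "\<gamma> r = \<gamma> a" "\<gamma> a < r" "r < a"
    by blast
  have "Op Add Rem Cnt \<chi> S1 r"
    using r(1,2) by (rule Op_S1_if_Rem1)
  from FS1'D(4)[OF FS1' this] have "val r = val a"
    using FS1'D(4)[OF FS1' a] r(3) by simp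
  with r show False
    using FS1'D(5)[OF FS1' a] by force
qed

theorem lemma2p2:
  fixes Add Rem Cnt :: "nat \<Rightarrow> bool" and val :: "nat \<Rightarrow> nat"
    and \<chi> :: "nat \<Rightarrow> status" and \<gamma> :: "nat \<Rightarrow> nat"
  assumes partition: "\<forall>a. Add a \<or> Rem a \<or> Cnt a"
    and disj: "\<forall>a. \<not> (Add a \<and> Rem a) \<and> \<not> (Add a \<and> Cnt a) \<and> \<not> (Rem a \<and> Cnt a)"
    and cnt: "\<forall>a. Cnt a \<longrightarrow> \<chi> a \<noteq> Sf"
  shows "(FS0 Add Rem Cnt \<chi> \<gamma> \<and> FS1 Add Rem Cnt val \<chi> \<gamma> \<and> FS2 Add Rem Cnt val \<chi> \<gamma>)
     \<longleftrightarrow> (FS0 Add Rem Cnt \<chi> \<gamma> \<and> FS1' Add Rem Cnt val \<chi> \<gamma> \<and> FS2 Add Rem Cnt val \<chi> \<gamma>)"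
  using FS1_FS2_imp_FS1' FS1'_imp_FS1 by blast

end
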